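(* (Wireless network localization.) Let $n\ge 1$, let $\phi_{k1},\dots,\phi_{kn}\in\mathbb{R}$ and $\xi_{k1},\dots,\xi_{kn}\ge 0$. For $\mathbf{x}=[x_1,\dots,x_n]^{\mathsf T}\succeq\mathbf{0}$ let $\mathbf{J}_{\mathrm e}(\mathbf{p}_k;\mathbf{x})=\sum_{j=1}^n x_j\,\xi_{kj}\,\mathbf{J}_{\mathrm r}(\phi_{kj})$ and $\mathcal{P}(\mathbf{p}_k;\mathbf{x})=\operatorname{tr}\{\mathbf{J}_{\mathrm e}^{-1}(\mathbf{p}_k;\mathbf{x})\}$. Then $\mathcal{P}(\mathbf{p}_k;\mathbf{x})$ is a convex function of $\mathbf{x}\succeq\mathbf{0}$, and whenever $\mathbf{J}_{\mathrm e}(\mathbf{p}_k;\mathbf{x})$ is invertible, $$\mathcal{P}(\mathbf{p}_k;\mathbf{x})=\frac{4\cdot\mathbf{1}^{\mathsf T}\mathbf{R}_k\mathbf{x}}{\mathbf{x}^{\mathsf T}\mathbf{R}_k^{\mathsf T}\boldsymbol{\Lambda}_k\mathbf{R}_k\mathbf{x}},$$ where $\mathbf{R}_k=\operatorname{diag}\{\xi_{k1},\dots,\xi_{kn}\}$ and $\boldsymbol{\Lambda}_k$ is the symmetric matrix of rank at most $3$ given by $$\boldsymbol{\Lambda}_k=\mathbf{1}\mathbf{1}^{\mathsf T}-\mathbf{c}(2\boldsymbol{\phi}_k)\mathbf{c}(2\boldsymbol{\phi}_k)^{\mathsf T}-\mathbf{s}(2\boldsymbol{\phi}_k)\mathbf{s}(2\boldsymbol{\phi}_k)^{\mathsf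 T},\qquad \boldsymbol{\phi}_k=[\phi_{k1},\dots,\phi_{kn}]^{\mathsf T}.$$ (Radar network localization.) Let $N_t,N_r\ge1$, let $\phi_{kj}\in\mathbb{R}$ and $\xi_{kj}\ge 0$ for $k=1,\dots,N_r$, $j=1,\dots,N_t$. For $\mathbf{x}\in\mathbb{R}^{N_t}$, $\mathbf{x}\succeq\mathbf{0}$, let $\mathbf{J}_{\mathrm e}(\mathbf{p}_0;\mathbf{x})=\sum_{j=1}^{N_t}\sum_{k=1}^{N_r}x_j\,\xi_{kj}\,\mathbf{J}_{\mathrm r}(\phi_{kj})$ and $\mathcal{P}(\mathbf{p}_0;\mathbf{x})=\operatorname{tr}\{\mathbf{J}_{\mathrm e}^{-1}(\mathbf{p}_0;\mathbf{x})\}$. Then $\mathcal{P}(\mathbf{p}_0;\mathbf{x})$ is a convex function of $\mathbf{x}\succeq\mathbf{0}$, and whenever $\mathbf{J}_{\mathrm e}(\mathbf{p}_0;\mathbf{x})$ is invertible, $$\mathcal{P}(\mathbf{p}_0;\mathbf{x})=\frac{4\cdot\mathbf{1}^{\mathsf T}\mathbf{R}\mathbf{x}}{\mathbf{x}^{\mathsf T}\mathbf{R}^{\mathsf T}\boldsymbol{\Lambda}\mathbf{R}\mathbf{x}},$$ where $\mathbf{R}=[\mathbf{R}_1^{\mathsf T}\ \mathbf{R}_2^{\mathsf T}\ \cdots\ \mathbf{R}_{N_r}^{\mathsf T}]^{\mathsf T}\in\mathbb{R}^{N_rN_t\times N_t}$ with $\mathbf{R}_k=\operatorname{diag}\{\xi_{k1},\dots,\xi_{kN_t}\}$,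 and $\boldsymbol{\Lambda}$ is the symmetric matrix of rank at most $3$ given by $\boldsymbol{\Lambda}=\mathbf{1}\mathbf{1}^{\mathsf T}-\mathbf{c}(2\boldsymbol{\phi})\mathbf{c}(2\boldsymbol{\phi})^{\mathsf T}-\mathbf{s}(2\boldsymbol{\phi})\mathbf{s}(2\boldsymbol{\phi})^{\mathsf T}$ with $\boldsymbol{\phi}=[\boldsymbol{\phi}_1^{\mathsf T}\ \cdots\ \boldsymbol{\phi}_{N_r}^{\mathsf T}]^{\mathsf T}$, $\boldsymbol{\phi}_k=[\phi_{k1},\dots,\phi_{kN_t}]^{\mathsf T}$.
   Context: Notation: $\mathbf{u}(\phi)=[\cos\phi\ \ \sin\phi]^{\mathsf T}$, $\mathbf{J}_{\mathrm r}(\phi)=\mathbf{u}(\phi)\mathbf{u}(\phi)^{\mathsf T}$; for $\boldsymbol\phi=[\phi_1,\dots,\phi_m]^{\mathsf T}$, $\mathbf{c}(\boldsymbol\phi)=[\cos\phi_1,\dots,\cos\phi_m]^{\mathsf T}$ and $\mathbf{s}(\boldsymbol\phi)=[\sin\phi_1,\dots,\sin\phi_m]^{\mathsf T}$; $\mathbf{1}$ is the all-ones vector of appropriate dimension; $\mathbf{x}\succeq\mathbf{0}$ means entrywise nonnegative. $\mathbf{x}$ is the power allocation vector, $\xi$'s are the equivalent ranging coefficients, and $\mathcal{P}$ is the squared position error bound (SPEB); the SPEB is regarded as $+\infty$ when the matrix $\mathbf{J}_{\mathrm e}$ is singular. *)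

theory Defs
  imports "HOL-Analysis.Analysis" "HOL-Library.Extended_Real"
begin

definition outer :: "real^'m \<Rightarrow> real^'n \<Rightarrow> real^'n^'m" where
  "outer u v = (\<chi> i j. u$i * v$j)"

definition uvec :: "real \<Rightarrow> real^2" where
  "uvec \<phi> = vector [cos \<phi>, sin \<phi>]"

definition Jr :: "real \<Rightarrow> real^2^2" where
  "Jr \<phi> = outer (uvec \<phi>) (uvec \<phi>)"

definition cvec :: "real^'n \<Rightarrow> real^'n" where
  "cvec \<phi> = (\<chi> i. cos (\<phi>$i))"

definition svec :: "real^'n \<Rightarrow> real^'n" where
  "svec \<phi> = (\<chi> i. sin (\<phi>$i))"

definition speb :: "real^2^2 \<Rightarrow> ereal" where
  "speb J = (if invertible J then ereal (trace (matrix_inv J)) else \<infinity>)"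

definition nonneg :: "real^'n \<Rightarrow> bool" where
  "nonneg x \<longleftrightarrow> (\<forall>i. 0 \<le> x$i)"

definition Je_wireless :: "real^'n \<Rightarrow> real^'n \<Rightarrow> real^'n \<Rightarrow> real^2^2" where
  "Je_wireless \<phi> \<xi> x = (\<Sum>j\<in>UNIV. (x$j * \<xi>$j) *\<^sub>R Jr (\<phi>$j))"

text \<open>Radar network: J_e(p_0; x) = sum_j sum_k x_j xi_kj J_r(phi_kj);
  phi and xi are indexed as phi$k$j with k a receiver, j a transmitter.\<close>
definition Je_radar :: "real^'t^'r \<Rightarrow> real^'t^'r \<Rightarrow> real^'t \<Rightarrow> real^2^2" where
  "Je_radar \<phi> \<xi> x = (\<Sum>j\<in>UNIV. \<Sum>k\<in>UNIV. (x$j * \<xi>$k$j) *\<^sub>R Jr (\<phi>$k$j))"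

definition Lambda_mat :: "real^'m \<Rightarrow> real^'m^'m" where
  "Lambda_mat \<phi> = outer (vec 1) (vec 1) - outer (cvec (2 *\<^sub>R \<phi>)) (cvec (2 *\<^sub>R \<phi>))
                    - outer (svec (2 *\<^sub>R \<phi>)) (svec (2 *\<^sub>R \<phi>))"

definition diag_mat :: "real^'n \<Rightarrow> real^'n^'n" where
  "diag_mat d = (\<chi> i j. if i = j then d$i else 0)"

text \<open>Stacked matrix R = [R_1^T ... R_Nr^T]^T, rows indexed by pairs (k,i),
  with R_k = diag(xi_k1, ..., xi_kNt).\<close>
definition R_stack :: "real^'t^'r \<Rightarrow> real^'t^('r \<times> 't)" where
  "R_stack \<xi> = (\<chi> ki j. (diag_mat (\<xi>$(fst ki)))$(snd ki)$j)"

text \<open>Stacked angle vector phi = [phi_1^T ... phi_Nr^T]^T indexed by pairs (k,j).\<close>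
definition phi_stack :: "real^'t^'r \<Rightarrow> real^('r \<times> 't)" where
  "phi_stack \<phi> = (\<chi> kj. \<phi>$(fst kj)$(snd kj))"

definition econvex_on :: "'a::real_vector set \<Rightarrow> ('a \<Rightarrow> ereal) \<Rightarrow> bool" where
  "econvex_on S f \<longleftrightarrow> (\<forall>x\<in>S. \<forall>y\<in>S. \<forall>t::real. 0 < t \<and> t < 1 \<longrightarrow>
      f ((1 - t) *\<^sub>R x + t *\<^sub>R y) \<le> ereal (1 - t) * f x + ereal t * f y)"

end

theory Submission imports Defs begin

text \<open>Both EFIMs have the form \<open>J(w) = \<Sum>i. w\<^sub>i J\<^sub>r(\<theta>\<^sub>i)\<close> with weights
  \<open>w = M x\<close> depending linearly on \<open>x\<close> through an entrywise nonnegative \<open>M\<close>.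
  For a \<open>2\<times>2\<close> matrix \<open>tr(J\<^sup>-\<^sup>1) = tr J / det J\<close>; here \<open>tr J = \<Sum>i. w\<^sub>i\<close> and
  \<open>4 det J = w\<^sup>T \<Lambda> w\<close> because \<open>\<Lambda>\<^sub>i\<^sub>j = 2 sin\<^sup>2(\<theta>\<^sub>i - \<theta>\<^sub>j)\<close>, which gives the closed form.
  Convexity: each diagonal entry of \<open>J\<^sup>-\<^sup>1\<close> is the supremum over \<open>v\<close> of the functionals
  \<open>2 v\<^sub>k - v\<^sup>T J v\<close>, which are affine in \<open>J\<close>; and a convex combination of nonsingular EFIMs
  stays nonsingular since \<open>w\<^sup>T \<Lambda> w\<close> is monotone in nonnegative weights.\<close>

lemma matrix_inv_eqI:
  fixes A M :: "real^'n^'n"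
  assumes "A ** M = mat 1" "M ** A = mat 1"
  shows "matrix_inv A = M"
proof -
  let ?A = "matrix_inv A"
  have "A ** ?A = mat 1 \<and> ?A ** A = mat 1"
    unfolding matrix_inv_def by (rule someI[of _ M]) (use assms in blast)
  then have "?A ** A = mat 1" by blast
  have "?A = ?A ** (A ** M)" using assms by (simp add: matrix_mul_rid)
  also have "\<dots> = (?A ** A) ** M" by (simp add: matrix_mul_assoc)
  also have "\<dots> = M" using \<open>?A ** A = mat 1\<close> by (simp add: matrix_mul_lid)
  finally show ?thesis .
qed

lemma speb_2x2:
  fixes J :: "real^2^2"
  assumes "det J \<noteq> 0"
  shows "speb J = ereal (trace J / det J)"
proof -
  \<comment> \<open>the adjugate of \<open>J\<close> divided by \<open>det J\<close>\<close>
  define M :: "real^2^2" where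
    "M = (\<chi> i j. if i = j then J$(if i = 1 then 2 else 1)$(if i = 1 then 2 else 1) / det J
                 else - J$i$j / det J)"
  have J_M: "J ** M = mat 1" and M_J: "M ** J = mat 1"
    using assms unfolding M_def det_2
    by (auto simp: vec_eq_iff matrix_matrix_mult_def forall_2 sum_2 mat_def divide_simps)
  have "invertible J" using assms by (simp add: invertible_det_nz)
  then show ?thesis
    unfolding speb_def matrix_inv_eqI[OF J_M M_J]
    by (simp add: trace_def sum_2 M_def add_divide_distrib)
qed

lemma corner_of_inverse_ge:
  fixes a b c p r :: real
  assumes "0 \<le> c" "0 < a*c - b^2"
  shows "2*p - (a*p^2 + 2*b*p*r + c*r^2) \<le> c / (a*c - b^2)"
proof -
  define d where "d = a*c - b^2"
  define y where "y = p - c/d"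
  define z where "z = r + b/d"
  have "d > 0" using assms by (simp add: d_def)
  then have "c > 0" using assms unfolding d_def
    by (cases "c = 0") (auto simp: not_less[symmetric])
  have "c/d - (2*p - (a*p^2 + 2*b*p*r + c*r^2)) = a*y^2 + 2*b*y*z + c*z^2"
    using \<open>d > 0\<close> unfolding y_def z_def
    by (simp add: field_simps power2_eq_square) (simp add: d_def power2_eq_square algebra_simps)
  moreover have "c * (a*y^2 + 2*b*y*z + c*z^2) = (c*z + b*y)^2 + d*y^2"
    unfolding d_def by (simp add: power2_eq_square algebra_simps)
  then have "0 \<le> a*y^2 + 2*b*y*z + c*z^2"
    using \<open>c > 0\<close> \<open>d > 0\<close> by (smt (verit) zero_le_power2 mult_nonneg_nonneg zero_le_mult_iff)
  ultimately show ?thesis unfolding d_def by simp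
qed

lemma corner_of_inverse_convex:
  fixes a b c a' b' c' t :: real
  defines "A \<equiv> (1-t)*a + t*a'" and "B \<equiv> (1-t)*b + t*b'" and "C \<equiv> (1-t)*c + t*c'"
  assumes "0 \<le> c" "0 < a*c - b^2" "0 \<le> c'" "0 < a'*c' - b'^2"
    and "0 \<le> t" "t \<le> 1" and "0 < A*C - B^2"
  shows "C / (A*C - B^2) \<le> (1-t) * (c / (a*c - b^2)) + t * (c' / (a'*c' - b'^2))"
proof -
  define d where "d = A*C - B^2"
  \<comment> \<open>the point where \<open>corner_of_inverse_ge\<close> is attained for the combined matrix\<close>
  define p where "p = C/d"
  define r where "r = -B/d"
  define f where "f a b c = 2*p - (a*p^2 + 2*b*p*r + c*r^2)" for a b c
  have "C/d = f A B C"
    using assms(10) unfolding f_def p_def r_def d_def[symmetric]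
    by (simp add: field_simps power2_eq_square) (simp add: d_def power2_eq_square algebra_simps)
  also have "\<dots> = (1-t) * f a b c + t * f a' b' c'"
    unfolding f_def A_def B_def C_def by (simp add: algebra_simps)
  also have "\<dots> \<le> (1-t) * (c / (a*c - b^2)) + t * (c' / (a'*c' - b'^2))"
    unfolding f_def using assms
    by (intro add_mono mult_left_mono corner_of_inverse_ge) simp_all
  finally show ?thesis unfolding d_def .
qed

lemma trace_div_det_convex:
  fixes J1 J2 :: "real^2^2" and t :: real
  defines "J \<equiv> (1-t) *\<^sub>R J1 + t *\<^sub>R J2"
  assumes "J1$1$2 = J1$2$1" "0 \<le> J1$1$1" "0 \<le> J1$2$2" "0 < det J1"
    and "J2$1$2 = J2$2$1" "0 \<le> J2$1$1" "0 \<le> J2$2$2" "0 < det J2"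
    and "0 \<le> t" "t \<le> 1" and "0 < det J"
  shows "trace J / det J \<le> (1-t) * (trace J1 / det J1) + t * (trace J2 / det J2)"
proof -
  have "J$1$1 / det J \<le> (1-t) * (J1$1$1 / det J1) + t * (J2$1$1 / det J2)"
    using corner_of_inverse_convex[where a="J1$2$2" and b="J1$1$2" and c="J1$1$1"
        and a'="J2$2$2" and b'="J2$1$2" and c'="J2$1$1" and t=t] assms
    by (simp add: det_2 power2_eq_square ac_simps)
  moreover have "J$2$2 / det J \<le> (1-t) * (J1$2$2 / det J1) + t * (J2$2$2 / det J2)"
    using corner_of_inverse_convex[where a="J1$1$1" and b="J1$1$2" and c="J1$2$2"
        and a'="J2$1$1" and b'="J2$1$2" and c'="J2$2$2" and t=t] assms
    by (simp add: det_2 power2_eq_square)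
  ultimately show ?thesis
    by (simp add: trace_def sum_2 add_divide_distrib algebra_simps)
qed

definition efim :: "real^'m \<Rightarrow> real^'m \<Rightarrow> real^2^2" where
  "efim \<theta> w = (\<Sum>i\<in>UNIV. w$i *\<^sub>R Jr (\<theta>$i))"

lemma efim_entries:
  "efim \<theta> w $1$1 = (\<Sum>i\<in>UNIV. w$i * (cos (\<theta>$i))^2)"
  "efim \<theta> w $1$2 = (\<Sum>i\<in>UNIV. w$i * (cos (\<theta>$i) * sin (\<theta>$i)))"
  "efim \<theta> w $2$1 = (\<Sum>i\<in>UNIV. w$i * (cos (\<theta>$i) * sin (\<theta>$i)))"
  "efim \<theta> w $2$2 = (\<Sum>i\<in>UNIV. w$i * (sin (\<theta>$i))^2)"
  by (simp_all add: efim_def Jr_def outer_def uvec_def power2_eq_square mult.commute)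

lemma efim_convex_comb:
  "efim \<theta> ((1-t) *\<^sub>R w1 + t *\<^sub>R w2) = (1-t) *\<^sub>R efim \<theta> w1 + t *\<^sub>R efim \<theta> w2"
  by (simp add: efim_def scaleR_add_left scaleR_sum_right sum.distrib)

lemma trace_efim: "trace (efim \<theta> w) = (\<Sum>i\<in>UNIV. w$i)"
  by (simp add: trace_def sum_2 efim_entries sum.distrib[symmetric] distrib_left[symmetric])

lemma Lambda_entry: "Lambda_mat \<theta> $i$j = 2 * (sin (\<theta>$i - \<theta>$j))^2"
proof -
  have "Lambda_mat \<theta> $i$j = 1 - cos (2*\<theta>$i - 2*\<theta>$j)"
    by (simp add: Lambda_mat_def outer_def cvec_def svec_def cos_diff)
  also have "\<dots> = 2 * (sin (\<theta>$i - \<theta>$j))^2"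
    using cos_double_sin[of "\<theta>$i - \<theta>$j"] by (simp add: algebra_simps)
  finally show ?thesis .
qed

lemma Lambda_sym: "transpose (Lambda_mat \<theta>) = Lambda_mat \<theta>"
  by (simp add: vec_eq_iff transpose_def Lambda_entry sin_diff power2_eq_square algebra_simps)

lemma Lambda_quadratic_form:
  "w \<bullet> (Lambda_mat \<theta> *v w) = (\<Sum>i\<in>UNIV. \<Sum>j\<in>UNIV. w$i * w$j * Lambda_mat \<theta> $i$j)"
  by (simp add: inner_vec_def matrix_vector_mult_def sum_distrib_left algebra_simps)

lemma Lambda_mult: "Lambda_mat \<theta> *v y = (vec 1 \<bullet> y) *\<^sub>R vec 1
    - (cvec (2 *\<^sub>R \<theta>) \<bullet> y) *\<^sub>R cvec (2 *\<^sub>R \<theta>) - (svec (2 *\<^sub>R \<theta>) \<bullet> y) *\<^sub>R svec (2 *\<^sub>R \<theta>)"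
  by (simp add: vec_eq_iff Lambda_mat_def outer_def matrix_vector_mult_def inner_vec_def
      sum_subtractf sum_distrib_left sum.distrib algebra_simps)

lemma Lambda_rank: "rank (Lambda_mat \<theta>) \<le> 3"
proof -
  let ?S = "{vec 1, cvec (2 *\<^sub>R \<theta>), svec (2 *\<^sub>R \<theta>)}"
  have "Lambda_mat \<theta> *v y \<in> span ?S" for y
    unfolding Lambda_mult by (intro span_diff span_scale span_base) auto
  then have "range (\<lambda>y. Lambda_mat \<theta> *v y) \<subseteq> span ?S" by blast
  then have "rank (Lambda_mat \<theta>) \<le> card ?S"
    unfolding rank_dim_range by (rule dim_le_card) simp
  also have "card ?S \<le> 3" by (simp add: card_insert_if)
  finally show ?thesis .
qed

lemma double_sum_eqI_symmetrized:
  fixes F G :: "'a::finite \<Rightarrow> 'a \<Rightarrow> real"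
  assumes "\<And>i j. F i j + F j i = G i j + G j i"
  shows "(\<Sum>i\<in>UNIV. \<Sum>j\<in>UNIV. F i j) = (\<Sum>i\<in>UNIV. \<Sum>j\<in>UNIV. G i j)"
proof -
  have "2 * (\<Sum>i\<in>UNIV. \<Sum>j\<in>UNIV. F i j) = (\<Sum>i\<in>UNIV. \<Sum>j\<in>UNIV. F i j + F j i)"
    using sum.swap[of F UNIV UNIV] by (simp add: sum.distrib)
  also have "\<dots> = (\<Sum>i\<in>UNIV. \<Sum>j\<in>UNIV. G i j + G j i)"
    using assms by simp
  also have "\<dots> = 2 * (\<Sum>i\<in>UNIV. \<Sum>j\<in>UNIV. G i j)"
    using sum.swap[of G UNIV UNIV] by (simp add: sum.distrib)
  finally show ?thesis by simp
qed

lemma det_efim: "4 * det (efim \<theta> w) = w \<bullet> (Lambda_mat \<theta> *v w)"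
proof -
  define c where "c i = cos (\<theta>$i)" for i
  define s where "s i = sin (\<theta>$i)" for i
  have "4 * det (efim \<theta> w)
      = (\<Sum>i\<in>UNIV. \<Sum>j\<in>UNIV. 4 * (w$i * w$j * ((c i)^2 * (s j)^2 - c i * s i * (c j * s j))))"
    unfolding det_2 efim_entries c_def s_def sum_product
    by (simp add: sum_subtractf sum_distrib_left algebra_simps)
  also have "\<dots> = (\<Sum>i\<in>UNIV. \<Sum>j\<in>UNIV. w$i * w$j * Lambda_mat \<theta> $i$j)"
  proof (rule double_sum_eqI_symmetrized)
    fix i j
    have Lij: "Lambda_mat \<theta> $i$j = 2 * (s i * c j - c i * s j)^2"
      and Lji: "Lambda_mat \<theta> $j$i = 2 * (s i * c j - c i * s j)^2"
      by (simp_all add: Lambda_entry sin_diff c_def s_def power2_eq_square algebra_simps)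
    show "4 * (w$i * w$j * ((c i)^2 * (s j)^2 - c i * s i * (c j * s j)))
        + 4 * (w$j * w$i * ((c j)^2 * (s i)^2 - c j * s j * (c i * s i)))
      = w$i * w$j * Lambda_mat \<theta> $i$j + w$j * w$i * Lambda_mat \<theta> $j$i"
      unfolding Lij Lji by (simp add: power2_eq_square algebra_simps)
  qed
  finally show ?thesis by (simp only: Lambda_quadratic_form)
qed

lemma det_efim_mono:
  assumes "nonneg v" and "\<forall>i. v$i \<le> w$i"
  shows "det (efim \<theta> v) \<le> det (efim \<theta> w)"
proof -
  have "v \<bullet> (Lambda_mat \<theta> *v v) \<le> w \<bullet> (Lambda_mat \<theta> *v w)"
    unfolding Lambda_quadratic_form
  proof (intro sum_mono mult_right_mono mult_mono)
    fix i j
    show "0 \<le> Lambda_mat \<theta> $i$j" by (simp add: Lambda_entry)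
    show "v$i \<le> w$i" "v$j \<le> w$j" "0 \<le> v$j" "0 \<le> w$i"
      using assms unfolding nonneg_def by (auto intro: order_trans)
  qed
  then show ?thesis by (simp flip: det_efim)
qed

lemma det_efim_nonneg: "nonneg w \<Longrightarrow> 0 \<le> det (efim \<theta> w)"
  using det_efim_mono[of 0 w \<theta>] by (simp add: nonneg_def efim_def det_2)

lemma det_efim_scaleR: "det (efim \<theta> (a *\<^sub>R w)) = a^2 * det (efim \<theta> w)"
proof -
  have "4 * det (efim \<theta> (a *\<^sub>R w)) = a^2 * (4 * det (efim \<theta> w))"
    by (simp only: det_efim) (simp add: matrix_vector_mult_scaleR power2_eq_square)
  then show ?thesis by simp
qed

lemma efim_diag_nonneg:
  assumes "nonneg w"
  shows "0 \<le> efim \<theta> w $1$1" and "0 \<le> efim \<theta> w $2$2"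
  using assms by (auto simp: efim_entries nonneg_def intro!: sum_nonneg)

lemma speb_efim_convex:
  assumes w1: "nonneg w1" and w2: "nonneg w2" and t: "0 < t" "t < 1"
  shows "speb (efim \<theta> ((1-t) *\<^sub>R w1 + t *\<^sub>R w2))
    \<le> ereal (1-t) * speb (efim \<theta> w1) + ereal t * speb (efim \<theta> w2)"
proof (cases "det (efim \<theta> w1) = 0 \<or> det (efim \<theta> w2) = 0")
  case True
  then have "speb (efim \<theta> w1) = \<infinity> \<or> speb (efim \<theta> w2) = \<infinity>"
    by (auto simp: speb_def invertible_det_nz)
  moreover have "speb (efim \<theta> w1) \<noteq> -\<infinity>" "speb (efim \<theta> w2) \<noteq> -\<infinity>"
    by (auto simp: speb_def)
  ultimately show ?thesis
    using t by (cases "speb (efim \<theta> w1)"; cases "speb (efim \<theta> w2)") auto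
next
  case False
  let ?J1 = "efim \<theta> w1" and ?J2 = "efim \<theta> w2" and ?J = "efim \<theta> ((1-t) *\<^sub>R w1 + t *\<^sub>R w2)"
  have det1: "0 < det ?J1" and det2: "0 < det ?J2"
    using False det_efim_nonneg[OF w1, of \<theta>] det_efim_nonneg[OF w2, of \<theta>] by auto
  have "0 < (1-t)^2 * det ?J1" using det1 t by simp
  also have "\<dots> = det (efim \<theta> ((1-t) *\<^sub>R w1))" by (simp add: det_efim_scaleR)
  also have "\<dots> \<le> det ?J"
    using w1 w2 t by (intro det_efim_mono) (auto simp: nonneg_def)
  finally have det: "0 < det ?J" .
  have "trace ?J / det ?J \<le> (1-t) * (trace ?J1 / det ?J1) + t * (trace ?J2 / det ?J2)"
    unfolding efim_convex_comb using det1 det2 det t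
    by (intro trace_div_det_convex efim_diag_nonneg w1 w2)
      (simp_all add: efim_entries flip: efim_convex_comb)
  then show ?thesis
    using det det1 det2 by (simp add: speb_2x2)
qed

lemma speb_efim:
  assumes "det (efim \<theta> w) \<noteq> 0"
  shows "speb (efim \<theta> w) = ereal (4 * (\<Sum>i\<in>UNIV. w$i) / (w \<bullet> (Lambda_mat \<theta> *v w)))"
  using assms by (simp add: speb_2x2 trace_efim flip: det_efim)

lemma nonneg_matrix_vector_mult:
  assumes "\<forall>i j. 0 \<le> M$i$j" and "nonneg x"
  shows "nonneg (M *v x)"
  using assms by (auto simp: nonneg_def matrix_vector_mult_def intro!: sum_nonneg)

lemma econvex_speb_efim_linear:
  fixes M :: "real^'n^'m"
  assumes "\<forall>i j. 0 \<le> M$i$j"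
  shows "econvex_on {x. nonneg x} (\<lambda>x. speb (efim \<theta> (M *v x)))"
  unfolding econvex_on_def
proof (intro ballI allI impI)
  fix x y :: "real^'n" and t :: real
  assume "x \<in> {x. nonneg x}" "y \<in> {x. nonneg x}" "0 < t \<and> t < 1"
  then show "speb (efim \<theta> (M *v ((1-t) *\<^sub>R x + t *\<^sub>R y)))
      \<le> ereal (1-t) * speb (efim \<theta> (M *v x)) + ereal t * speb (efim \<theta> (M *v y))"
    using nonneg_matrix_vector_mult[OF assms]
    by (simp add: matrix_vector_right_distrib matrix_vector_mult_scaleR speb_efim_convex)
qed

lemma speb_efim_linear:
  fixes M :: "real^'n^'m"
  assumes "invertible (efim \<theta> (M *v x))"
  shows "speb (efim \<theta> (M *v x))
    = ereal (4 * (vec 1 \<bullet> (M *v x)) / (x \<bullet> ((transpose M ** Lambda_mat \<theta> ** M) *v x)))"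
proof -
  have "x \<bullet> ((transpose M ** Lambda_mat \<theta> ** M) *v x) = x \<bullet> (transpose M *v (Lambda_mat \<theta> *v (M *v x)))"
    by (simp add: matrix_vector_mul_assoc matrix_mul_assoc)
  also have "\<dots> = (M *v x) \<bullet> (Lambda_mat \<theta> *v (M *v x))"
    by (metis inner_commute dot_lmul_matrix transpose_matrix_vector)
  finally show ?thesis
    using assms by (simp add: speb_efim invertible_det_nz inner_vec_def)
qed

lemma Je_wireless_eq_efim: "Je_wireless \<phi> \<xi> x = efim \<phi> (diag_mat \<xi> *v x)"
proof -
  have "(diag_mat \<xi> *v x) $ j = x$j * \<xi>$j" for j
    by (simp add: diag_mat_def matrix_vector_mult_def if_distrib[where f="\<lambda>a. a * _"] cong: if_cong)
  then show ?thesis by (simp add: Je_wireless_def efim_def)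
qed

lemma Je_radar_eq_efim: "Je_radar \<phi> \<xi> x = efim (phi_stack \<phi>) (R_stack \<xi> *v x)"
proof -
  have R: "(R_stack \<xi> *v x) $ (k,j) = x$j * \<xi>$k$j" for k j
    by (simp add: R_stack_def diag_mat_def matrix_vector_mult_def if_distrib[where f="\<lambda>a. a * _"]
        cong: if_cong)
  have "Je_radar \<phi> \<xi> x = (\<Sum>k\<in>UNIV. \<Sum>j\<in>UNIV. (x$j * \<xi>$k$j) *\<^sub>R Jr (\<phi>$k$j))"
    unfolding Je_radar_def by (rule sum.swap)
  also have "\<dots> = (\<Sum>(k,j)\<in>UNIV. (x$j * \<xi>$k$j) *\<^sub>R Jr (\<phi>$k$j))"
    by (simp add: sum.cartesian_product)
  also have "\<dots> = efim (phi_stack \<phi>) (R_stack \<xi> *v x)"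
    unfolding efim_def by (rule sum.cong) (auto simp: R phi_stack_def)
  finally show ?thesis .
qed

theorem lemma1:
  fixes \<phi>w \<xi>w :: "real^'n"
    and \<phi>r \<xi>r :: "real^'t^'r"
  assumes xiw_nonneg: "\<forall>j. 0 \<le> \<xi>w$j"
    and xir_nonneg: "\<forall>k j. 0 \<le> \<xi>r$k$j"
  shows
    "econvex_on {x. nonneg x} (\<lambda>x. speb (Je_wireless \<phi>w \<xi>w x))
     \<and> transpose (Lambda_mat \<phi>w) = Lambda_mat \<phi>w
     \<and> rank (Lambda_mat \<phi>w) \<le> 3
     \<and> (\<forall>x. nonneg x \<and> invertible (Je_wireless \<phi>w \<xi>w x) \<longrightarrow>
          speb (Je_wireless \<phi>w \<xi>w x) =
          ereal (4 * (vec 1 \<bullet> (diag_mat \<xi>w *v x)) /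
                 (x \<bullet> ((transpose (diag_mat \<xi>w) ** Lambda_mat \<phi>w ** diag_mat \<xi>w) *v x))))
     \<and> econvex_on {x. nonneg x} (\<lambda>x. speb (Je_radar \<phi>r \<xi>r x))
     \<and> transpose (Lambda_mat (phi_stack \<phi>r)) = Lambda_mat (phi_stack \<phi>r)
     \<and> rank (Lambda_mat (phi_stack \<phi>r)) \<le> 3
     \<and> (\<forall>x. nonneg x \<and> invertible (Je_radar \<phi>r \<xi>r x) \<longrightarrow>
          speb (Je_radar \<phi>r \<xi>r x) =
          ereal (4 * (vec 1 \<bullet> (R_stack \<xi>r *v x)) /
                 (x \<bullet> ((transpose (R_stack \<xi>r) ** Lambda_mat (phi_stack \<phi>r) ** R_stack \<xi>r) *v x))))"
proof -
  have "\<forall>i j. 0 \<le> diag_mat \<xi>w $i$j" using xiw_nonneg by (simp add: diag_mat_def)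
  moreover have "\<forall>i j. 0 \<le> R_stack \<xi>r $i$j" using xir_nonneg by (simp add: R_stack_def diag_mat_def)
  ultimately show ?thesis
    unfolding Je_wireless_eq_efim Je_radar_eq_efim
    by (simp add: econvex_speb_efim_linear speb_efim_linear Lambda_sym Lambda_rank)
qed

end
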